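(* In the setting below, for all $j\in\mathcal{S}$ and all $x\in\mathbb{R}^{|\mathcal{S}|}$, if $\|(\mathrm{Id}-B_j)x\|=\|x\|$ then $x\in\operatorname{span}(M^{1/2}_{:,j})^\perp$.
   Context: Setting: $f:\mathbb{R}^p\to\mathbb{R}$ convex, differentiable with Lipschitz gradient; $g_j:\mathbb{R}\to\mathbb{R}\cup\{+\infty\}$ proper closed convex; $x^\star$ a minimizer of $f(x)+\sum_jg_j(x_j)$; $\mathcal{S}=\{j:\partial g_j(x^\star_j)\text{ is a singleton}\}$; $g_j$ is $\mathcal{C}^2$ near $x^\star_j$ for $j\in\mathcal{S}$, $f$ is $\mathcal{C}^2$ near $x^\star$, and $\nabla^2_{\mathcal{S},\mathcal{S}}f(x^\star)\succ0$. Step sizes $0<\gamma_j\le1/L_j$, $L_j$ the coordinatewise Lipschitz constant of $\nabla_jf$. For $j\in\mathcal{S}$, $z^\star_j=x^\star_j-\gamma_j\nabla_jf(x^\star)$, $p_j>0$ the derivative of $\operatorname{prox}_{\gamma_jg_j}$ at $z^\star_j$, $u_j=\frac1{\gamma_jp_j}-\frac1{\gamma_j}$, $M=\nabla^2_{\mathcal{S},\mathcal{S}}f(x^\star)+\operatorname{diag}(u)$ (symmetric positive definite), $M^{1/2}$ its symmetric square root, and $B_j=\gamma_jp_j\,M^{1/2}_{:,j}(M^{1/2}_{:,j})^\top$. $\|\cdot\|$ is the Euclidean norm. *)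

theory Defs
  imports "HOL-Analysis.Analysis"
begin

definition proper_fun :: "(real \<Rightarrow> ereal) \<Rightarrow> bool" where
  "proper_fun g \<longleftrightarrow> (\<forall>t. g t \<noteq> -\<infinity>) \<and> (\<exists>t. g t \<noteq> \<infinity>)"

definition closed_fun :: "(real \<Rightarrow> ereal) \<Rightarrow> bool" where
  "closed_fun g \<longleftrightarrow>
     (\<forall>t X. X \<longlonglongrightarrow> t \<longrightarrow> g t \<le> liminf (\<lambda>n. g (X n)))"

definition convex_efun :: "(real \<Rightarrow> ereal) \<Rightarrow> bool" where
  "convex_efun g \<longleftrightarrow>
     (\<forall>x y a. 0 \<le> a \<and> a \<le> 1 \<longrightarrow>
        g ((1 - a) * x + a * y) \<le> ereal (1 - a) * g x + ereal a * g y)"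

definition subdiff :: "(real \<Rightarrow> ereal) \<Rightarrow> real \<Rightarrow> real set" where
  "subdiff g x = {v. \<forall>y. g x + ereal (v * (y - x)) \<le> g y}"

definition prox :: "real \<Rightarrow> (real \<Rightarrow> ereal) \<Rightarrow> real \<Rightarrow> real" where
  "prox \<gamma> g z = (THE y. \<forall>w. g y + ereal ((y - z)^2 / (2 * \<gamma>))
                              \<le> g w + ereal ((w - z)^2 / (2 * \<gamma>)))"

definition C2_near :: "(real \<Rightarrow> ereal) \<Rightarrow> real \<Rightarrow> bool" where
  "C2_near g t0 \<longleftrightarrow> (\<exists>e>0. \<exists>h h1 h2.
      (\<forall>t\<in>ball t0 e. g t = ereal (h t) \<and> (h has_real_derivative h1 t) (at t)
                       \<and> (h1 has_real_derivative h2 t) (at t))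
      \<and> continuous_on (ball t0 e) h2)"

end

theory Submission
  imports Defs
begin

text \<open>With \<open>m\<close> the \<open>j\<close>-th column of \<open>M\<^sup>1\<^sup>/\<^sup>2\<close> and \<open>c = \<gamma>\<^sub>j p\<^sub>j\<close> we have \<open>B\<^sub>j = c m m\<^sup>T\<close>, so
  \<open>\<parallel>(Id - B\<^sub>j) x\<parallel>\<^sup>2 = \<parallel>x\<parallel>\<^sup>2 - c (m \<bullet> x)\<^sup>2 (2 - c \<parallel>m\<parallel>\<^sup>2)\<close>. Moreover
  \<open>\<parallel>m\<parallel>\<^sup>2 = M\<^sub>j\<^sub>j = H\<^sub>j\<^sub>j + 1/(\<gamma>\<^sub>j p\<^sub>j) - 1/\<gamma>\<^sub>j\<close>, hence \<open>c \<parallel>m\<parallel>\<^sup>2 = \<gamma>\<^sub>j p\<^sub>j H\<^sub>j\<^sub>j + 1 - p\<^sub>j \<le> 1\<close>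
  because the diagonal Hessian entry \<open>H\<^sub>j\<^sub>j\<close> is at most the coordinatewise Lipschitz
  constant \<open>L\<^sub>j \<le> 1/\<gamma>\<^sub>j\<close>. Since \<open>2 - c \<parallel>m\<parallel>\<^sup>2 > 0\<close>, equality of the norms forces \<open>m \<bullet> x = 0\<close>.\<close>

lemma DERIV_abs_le_Lipschitz:
  fixes \<phi> :: "real \<Rightarrow> real"
  assumes "(\<phi> has_real_derivative D) (at a)"
    and "\<And>t. \<bar>\<phi> t - \<phi> a\<bar> \<le> K * \<bar>t - a\<bar>"
  shows "\<bar>D\<bar> \<le> K"
proof -
  have "((\<lambda>t. \<bar>(\<phi> t - \<phi> a) / (t - a)\<bar>) \<longlongrightarrow> \<bar>D\<bar>) (at a)"
    using assms(1) by (intro tendsto_rabs) (simp add: DERIV_def has_field_derivative_iff)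
  moreover have "\<bar>(\<phi> t - \<phi> a) / (t - a)\<bar> \<le> K" if "t \<noteq> a" for t
    using assms(2)[of t] that by (simp add: divide_le_eq)
  ultimately show ?thesis
    by (intro tendsto_upperbound) (auto simp: eventually_at_filter)
qed

lemma has_derivative_diag_le_partial_Lipschitz:
  fixes F :: "real^'n \<Rightarrow> real^'n" and H :: "real^'n^'n"
  assumes "(F has_derivative (\<lambda>h. H *v h)) (at a)"
    and "\<And>y t. \<bar>F (y + t *\<^sub>R axis j 1) $ j - F y $ j\<bar> \<le> K * \<bar>t\<bar>"
  shows "H $ j $ j \<le> K"
proof -
  define \<phi> where "\<phi> t = F (a + t *\<^sub>R axis j 1) $ j" for t
  have "((\<lambda>t. a + t *\<^sub>R axis j 1) has_derivative (\<lambda>t. t *\<^sub>R axis j 1)) (at 0)"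
    by (auto intro!: derivative_eq_intros)
  from diff_chain_at[OF this] assms(1)
  have "((\<lambda>t. F (a + t *\<^sub>R axis j 1)) has_derivative (\<lambda>t. H *v (t *\<^sub>R axis j 1))) (at 0)"
    by (simp add: o_def)
  then have "(\<phi> has_derivative (\<lambda>t. (H *v (t *\<^sub>R axis j 1)) $ j)) (at 0)"
    unfolding \<phi>_def by (rule bounded_linear.has_derivative[OF bounded_linear_vec_nth])
  moreover have "(\<lambda>t. (H *v (t *\<^sub>R axis j 1)) $ j) = (\<lambda>t. H $ j $ j * t)"
    by (auto simp: matrix_vector_mul_component inner_axis mult.commute)
  ultimately have "(\<phi> has_real_derivative H $ j $ j) (at 0)"
    by (simp add: has_field_derivative_def)
  moreover have "\<bar>\<phi> t - \<phi> 0\<bar> \<le> K * \<bar>t - 0\<bar>" for t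
    unfolding \<phi>_def using assms(2)[of a t] by simp
  ultimately have "\<bar>H $ j $ j\<bar> \<le> K"
    by (rule DERIV_abs_le_Lipschitz)
  then show ?thesis
    by simp
qed

lemma outer_product_mult_vector:
  "(\<chi> a b. m $ a * m $ b) *v x = (m \<bullet> x) *\<^sub>R (m :: real^'n)"
  by (simp add: vec_eq_iff matrix_vector_mult_def inner_vec_def sum_distrib_left mult_ac)

lemma symmetric_square_diag_eq_column_inner:
  fixes R :: "real^'n^'n"
  assumes "transpose R = R"
  shows "(R ** R) $ j $ j = column j R \<bullet> column j R"
  using matrix_mult_transpose_dot_column[of R] assms by simp

lemma norm_rank_one_update_eq_imp_orthogonal:
  fixes m x :: "'a :: real_inner"
  assumes "c > 0" and "c * (m \<bullet> m) < 2"
    and "norm (x - (c * (m \<bullet> x)) *\<^sub>R m) = norm x"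
  shows "m \<bullet> x = 0"
proof -
  have "(norm (x - (c * (m \<bullet> x)) *\<^sub>R m))\<^sup>2
      = (norm x)\<^sup>2 - c * (m \<bullet> x)\<^sup>2 * (2 - c * (m \<bullet> m))"
    unfolding power2_norm_eq_inner inner_diff_left inner_diff_right
      inner_scaleR_left inner_scaleR_right inner_commute[of x m]
    by (simp add: power2_eq_square algebra_simps)
  with assms show ?thesis
    by simp
qed

theorem lemma7:
  fixes f :: "real^'n \<Rightarrow> real"
    and grad :: "real^'n \<Rightarrow> real^'n"
    and Hf :: "real^'n \<Rightarrow> real^'n^'n"
    and g :: "'n \<Rightarrow> real \<Rightarrow> ereal"
    and xs :: "real^'n"
    and L \<gamma> p :: "'n \<Rightarrow> real"
    and S :: "'n set"
    and R :: "real^'n^'n"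
    and j :: 'n
    and x :: "real^'n"
  assumes f_convex: "convex_on UNIV f"
    and f_grad: "\<And>y. (f has_derivative (\<lambda>h. grad y \<bullet> h)) (at y)"
    and grad_lipschitz: "\<exists>K. \<forall>y z. norm (grad y - grad z) \<le> K * dist y z"
    and g_proper: "\<And>i. proper_fun (g i)"
    and g_closed: "\<And>i. closed_fun (g i)"
    and g_convex: "\<And>i. convex_efun (g i)"
    and xs_min: "\<And>y. ereal (f xs) + (\<Sum>i\<in>UNIV. g i (xs $ i))
                      \<le> ereal (f y) + (\<Sum>i\<in>UNIV. g i (y $ i))"
    and S_def: "S = {i. \<exists>v. subdiff (g i) (xs $ i) = {v}}"
    and g_C2: "\<And>i. i \<in> S \<Longrightarrow> C2_near (g i) (xs $ i)"
    and f_C2: "\<exists>e>0. (\<forall>y\<in>ball xs e. (grad has_derivative (\<lambda>h. Hf y *v h)) (at y))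
                       \<and> continuous_on (ball xs e) Hf"
    and H_SS_pd: "\<And>v. (\<forall>i. i \<notin> S \<longrightarrow> v $ i = 0) \<Longrightarrow> v \<noteq> 0 \<Longrightarrow>
                       v \<bullet> (Hf xs *v v) > 0"
    and L_lip: "\<And>i y t. L i \<ge> 0 \<and>
                  \<bar>grad (y + t *\<^sub>R axis i 1) $ i - grad y $ i\<bar> \<le> L i * \<bar>t\<bar>"
    and step: "\<And>i. 0 < \<gamma> i \<and> \<gamma> i * L i \<le> 1"
    and p_deriv: "\<And>i. i \<in> S \<Longrightarrow>
        (prox (\<gamma> i) (g i) has_real_derivative p i) (at (xs $ i - \<gamma> i * grad xs $ i))"
    and p_pos: "\<And>i. i \<in> S \<Longrightarrow> p i > 0"
    and R_supp: "\<And>i k. i \<notin> S \<or> k \<notin> S \<Longrightarrow> R $ i $ k = 0"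
    and R_sym: "transpose R = R"
    and R_psd: "\<And>v. v \<bullet> (R *v v) \<ge> 0"
    and R_sqrt: "R ** R = (\<chi> i k. if i \<in> S \<and> k \<in> S then
                     Hf xs $ i $ k + (if i = k then 1 / (\<gamma> i * p i) - 1 / \<gamma> i else 0)
                   else 0)"
    and j_S: "j \<in> S"
    and x_S: "\<And>i. i \<notin> S \<Longrightarrow> x $ i = 0"
    and norm_eq: "norm (x - (\<gamma> j * p j) *\<^sub>R ((\<chi> a b. R $ a $ j * R $ b $ j) *v x)) = norm x"
  shows "x \<in> orthogonal_comp (span {(\<chi> i. R $ i $ j)})"
proof -
  define m where "m = column j R"
  define c where "c = \<gamma> j * p j"
  have \<gamma>_pos: "\<gamma> j > 0" and p_pos_j: "p j > 0"
    using step p_pos j_S by auto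
  have "(grad has_derivative (\<lambda>h. Hf xs *v h)) (at xs)"
    using f_C2 centre_in_ball by blast
  then have "Hf xs $ j $ j \<le> L j"
    using L_lip by (intro has_derivative_diag_le_partial_Lipschitz[of grad]) auto
  then have step_H: "\<gamma> j * Hf xs $ j $ j \<le> 1"
    using mult_left_mono[of _ _ "\<gamma> j"] step[of j] \<gamma>_pos by (meson less_imp_le order_trans)
  have m_norm: "m \<bullet> m = Hf xs $ j $ j + 1 / (\<gamma> j * p j) - 1 / \<gamma> j"
    using symmetric_square_diag_eq_column_inner[OF R_sym, of j] R_sqrt j_S
    by (simp add: m_def)
  have "c * (m \<bullet> m) = p j * (\<gamma> j * Hf xs $ j $ j) + 1 - p j"
    using \<gamma>_pos p_pos_j by (simp add: c_def m_norm field_simps)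
  also have "\<dots> \<le> 1"
    using step_H p_pos_j mult_left_le[of "\<gamma> j * Hf xs $ j $ j" "p j"] by simp
  finally have "c * (m \<bullet> m) \<le> 1" .
  moreover have "norm (x - (c * (m \<bullet> x)) *\<^sub>R m) = norm x"
    using norm_eq outer_product_mult_vector[of m x] by (simp add: c_def m_def column_def)
  ultimately have "m \<bullet> x = 0"
    using \<gamma>_pos p_pos_j by (intro norm_rank_one_update_eq_imp_orthogonal[of c]) (auto simp: c_def)
  then show ?thesis
    by (auto simp: m_def column_def orthogonal_comp_def orthogonal_def span_singleton inner_commute)
qed

end
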